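(* Let $\mathcal{A}=\{1,\dots,K\}$ be a finite set of arms, each arm $i$ having a feature vector $\mathbf{x}_i\in\mathbb{R}^d$, and let $\boldsymbol{\theta}\in\mathbb{R}^d$ be an unknown parameter with mean rewards $\mu_i=\mathbf{x}_i^T\boldsymbol{\theta}$ and $\mu_*=\max_{i\in\mathcal{A}}\mu_i$. Fix a round $t$, a positive definite matrix $\mathbf{V}_t\in\mathbb{R}^{d\times d}$, estimates $\hat{\mu}_{i,t}\in\mathbb{R}$ for $i\in\mathcal{A}$, and $\beta>0$ such that $|\hat{\mu}_{i,t}-\mu_i|\le \beta\|\mathbf{x}_i\|_{\mathbf{V}_t^{-1}}$ for all $i\in\mathcal{A}$. Let $i_*\in\arg\max_{i\in\mathcal{A}}\big(\hat{\mu}_{i,t}-\beta\|\mathbf{x}_i\|_{\mathbf{V}_t^{-1}}\big)$, and for each $i\in\mathcal{A}$ define $$S_{i,t}=\beta\big(\|\mathbf{x}_i\|_{\mathbf{V}_t^{-1}}+\|\mathbf{x}_{i_*}\|_{\mathbf{V}_t^{-1}}\big)-\big(\hat{\mu}_{i_*,t}-\hat{\mu}_{i,t}\big).$$ Then: (1) if $S_{i,t}<0$, arm $i$ is suboptimal, i.e. $\mu_*-\mu_i>0$; (2) if $S_{i,t}\ge S_{j,t}\ge 0$, then $\hat{\mu}_{i,t}+\beta\|\mathbf{x}_i\|_{\mathbf{V}_t^{-1}}\ge \hat{\mu}_{j,t}+\beta\|\mathbf{x}_j\|_{\mathbf{V}_t^{-1}}$.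
   Context: For a positive definite matrix $\mathbf{M}$ and vector $\mathbf{x}$, $\|\mathbf{x}\|_{\mathbf{M}}=\sqrt{\mathbf{x}^T\mathbf{M}\mathbf{x}}$. In the paper $\mathbf{V}_t$ is the regularized Gram matrix of selected feature vectors and $\hat{\mu}_{i,t}=\mathbf{x}_i^T\hat{\boldsymbol{\theta}}_t$ with $\hat{\boldsymbol{\theta}}_t$ the least-squares estimate; the lemma only uses that $\mathbf{V}_t$ is positive definite and the stated confidence-bound inequality. *)

theory Defs
  imports "HOL-Analysis.Analysis"
begin

definition mnorm :: "real^'n^'n \<Rightarrow> real^'n \<Rightarrow> real" where
  "mnorm M x = sqrt (x \<bullet> (M *v x))"

definition pos_def :: "real^'n^'n \<Rightarrow> bool" where
  "pos_def M \<longleftrightarrow> transpose M = M \<and> (\<forall>x. x \<noteq> 0 \<longrightarrow> x \<bullet> (M *v x) > 0)"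

end

theory Submission
  imports Defs
begin

text \<open>Writing w i for the confidence width \<open>\<beta> * mnorm (matrix_inv V) (x i)\<close>, S i is the upper confidence bound of arm i minus the lower
  confidence bound of arm istar. If it is negative, the mean of i lies below that of istar and
  hence below the best mean; and since S differs from the upper confidence bound only by a
  constant, comparing S values compares upper confidence bounds. Neither part uses that istar
  maximises the lower bound (only that it is an arm), nor positive definiteness, nor
  \<open>\<beta> > 0\<close>, nor \<open>S j \<ge> 0\<close>.\<close>

lemma suboptimal_if_ucb_below_lcb:
  fixes \<mu> \<mu>hat w :: "'a \<Rightarrow> real"
  assumes "finite A" "k \<in> A"
    and "\<bar>\<mu>hat i - \<mu> i\<bar> \<le> w i" "\<bar>\<mu>hat k - \<mu> k\<bar> \<le> w k"
    and "\<mu>hat i + w i < \<mu>hat k - w k"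
  shows "\<mu> i < Max (\<mu> ` A)"
proof -
  have "\<mu> i < \<mu> k" using assms(3-5) by linarith
  also have "\<mu> k \<le> Max (\<mu> ` A)" using assms(1,2) by simp
  finally show ?thesis .
qed

theorem lemma1:
  fixes K :: nat
    and x :: "nat \<Rightarrow> real^'d"
    and \<theta> :: "real^'d"
    and V :: "real^'d^'d"
    and muhat :: "nat \<Rightarrow> real"
    and \<beta> :: real
    and istar :: nat
  defines "\<mu> \<equiv> (\<lambda>i. x i \<bullet> \<theta>)"
    and "\<mu>star \<equiv> Max ((\<lambda>i. x i \<bullet> \<theta>) ` {1..K})"
    and "S \<equiv> (\<lambda>i. \<beta> * (mnorm (matrix_inv V) (x i) + mnorm (matrix_inv V) (x istar))
                     - (muhat istar - muhat i))"
  assumes "K \<ge> 1"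
    and "pos_def V"
    and "\<beta> > 0"
    and "\<forall>i\<in>{1..K}. \<bar>muhat i - \<mu> i\<bar> \<le> \<beta> * mnorm (matrix_inv V) (x i)"
    and "is_arg_max (\<lambda>i. muhat i - \<beta> * mnorm (matrix_inv V) (x i)) (\<lambda>i. i \<in> {1..K}) istar"
  shows "(\<forall>i\<in>{1..K}. S i < 0 \<longrightarrow> \<mu>star - \<mu> i > 0)
       \<and> (\<forall>i\<in>{1..K}. \<forall>j\<in>{1..K}. S i \<ge> S j \<and> S j \<ge> 0 \<longrightarrow>
            muhat i + \<beta> * mnorm (matrix_inv V) (x i) \<ge> muhat j + \<beta> * mnorm (matrix_inv V) (x j))"
proof -
  define w where "w i = \<beta> * mnorm (matrix_inv V) (x i)" for i
  have S_eq: "S i = (muhat i + w i) - (muhat istar - w istar)" for i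
    unfolding S_def w_def by (simp add: algebra_simps)
  have istar: "istar \<in> {1..K}"
    using assms(8) by (simp add: is_arg_max_def)
  have width: "\<bar>muhat i - \<mu> i\<bar> \<le> w i" if "i \<in> {1..K}" for i
    using assms(7) that unfolding w_def by blast
  have "\<mu> i < \<mu>star" if "i \<in> {1..K}" "S i < 0" for i
    using suboptimal_if_ucb_below_lcb[of "{1..K}" istar muhat i \<mu> w] width istar that
    unfolding S_eq \<mu>star_def \<mu>_def by simp
  then show ?thesis
    unfolding S_eq w_def by auto
qed

end
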